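(* Consider the fractional online multiple knapsack problem (FOMKP) with aggregate value functions under Assumption B, with $\theta=U/L$. Let $\alpha$ be the solution $\alpha>1$ of $\alpha-1-\frac{1}{\alpha-1}=\ln\theta$, and for each knapsack $m$ let $\beta_m^*=\frac{C_m}{\alpha-1}$ and $$\phi_m^*(w)=\begin{cases} L & w\in[0,\beta_m^* ),\\ L\,e^{\frac{\alpha}{C_m}w-\frac{\alpha}{\alpha-1}} & w\in[\beta_m^*,C_m],\\ +\infty & w>C_m.\end{cases}$$ Then the competitive ratio of $\mathsf{OTA}_{\phi^*}$ with $\phi^*=\{\phi^*_m\}_m$ is $\alpha$.
   Context: FOMKP: knapsacks $m\in\mathcal M=\{1,\dots,M\}$ with capacities $C_m>0$; items $n=1,\dots,N$ arrive one at a time. Item $n$ reveals on arrival a size $D_n>0$, rate limits $Y_{nm}\ge 0$, and a value function $g_n$ on $\mathcal Y_n=\{\mathbf y_n\in\mathbb R^M: \sum_m y_{nm}\le D_n,\ 0\le y_{nm}\le Y_{nm}\}$. The offline problem is $\max\sum_n g_n(\mathbf y_n)$ subject to $\mathbf y_n\in\mathcal Y_n$ for all $n$ and $\sum_n y_{nm}\le C_m$ for all $m$. Aggregate value function: $g_n(\mathbf y_n)=g_n(\sum_m y_{nm})$ for a scalar function $g_n$. Assumption B: each $g_n$ is non-decreasing, differentiable and concave on $\mathcal Y_n$, $g_n(\mathbf 0)=0$, and $L\le \partial g_n/\partial y_{nm}\le U$ for all $n,m$, with $L,U>0$ and the $C_m$ known in advance. An online algorithm irrevocably chooses $\mathbf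 y_n$ upon arrival of item $n$ using only items $1,\dots,n$ and the known parameters, keeping all constraints feasible; its competitive ratio is $\sup_{\mathcal I}\mathrm{OPT}(\mathcal I)/\mathrm{ALG}(\mathcal I)$ over all instances satisfying Assumption B (and the value-function class in question). $\mathsf{OTA}_\phi$ for threshold functions $\phi_m$ (non-decreasing on $[0,C_m]$, $+\infty$ beyond $C_m$): start with $w_m^{(1)}=0$; upon arrival of item $n$ choose $\mathbf y_n^*\in\arg\max_{\mathbf y_n\in\mathcal Y_n} g_n(\mathbf y_n)-\sum_m\int_{w_m^{(n)}}^{w_m^{(n)}+y_{nm}}\phi_m(u)du$, and set $w_m^{(n+1)}=w_m^{(n)}+y^*_{nm}$. *)

theory Defs
  imports "HOL-Analysis.Analysis"
begin

text \<open>Knapsacks are indexed by m < M, items by n < N.  An allocation of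
  item n is a vector v :: nat => real with v m = 0 for m >= M.\<close>

definition Yset :: "nat \<Rightarrow> real \<Rightarrow> (nat \<Rightarrow> real) \<Rightarrow> (nat \<Rightarrow> real) set" where
  "Yset M Dn Yn = {v. (\<forall>m<M. 0 \<le> v m \<and> v m \<le> Yn m) \<and> (\<forall>m\<ge>M. v m = 0)
                      \<and> (\<Sum>m<M. v m) \<le> Dn}"

text \<open>Assumption B for a single item with aggregate value function gn
  (the value of allocation v is gn (sum of v m)).\<close>
definition assumptionB ::
  "real \<Rightarrow> real \<Rightarrow> nat \<Rightarrow> real \<Rightarrow> (nat \<Rightarrow> real) \<Rightarrow> (real \<Rightarrow> real) \<Rightarrow> bool" where
  "assumptionB L U M Dn Yn gn \<longleftrightarrow>
     Dn > 0 \<and> (\<forall>m<M. Yn m \<ge> 0) \<and>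
     (let S = (\<lambda>v. \<Sum>m<M. v m) ` Yset M Dn Yn in
        mono_on S gn \<and> concave_on S gn \<and> gn 0 = 0 \<and>
        (\<forall>s\<in>S. \<exists>d. (gn has_real_derivative d) (at s within S) \<and> L \<le> d \<and> d \<le> U))"

definition valid_instance ::
  "real \<Rightarrow> real \<Rightarrow> nat \<Rightarrow> (nat \<Rightarrow> real) \<Rightarrow> nat \<Rightarrow> (nat \<Rightarrow> real) \<Rightarrow>
   (nat \<Rightarrow> nat \<Rightarrow> real) \<Rightarrow> (nat \<Rightarrow> real \<Rightarrow> real) \<Rightarrow> bool" where
  "valid_instance L U M C N D Y g \<longleftrightarrow>
     M \<ge> 1 \<and> (\<forall>m<M. C m > 0) \<and> (\<forall>n<N. assumptionB L U M (D n) (Y n) (g n))"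

definition offline_feasible ::
  "nat \<Rightarrow> (nat \<Rightarrow> real) \<Rightarrow> nat \<Rightarrow> (nat \<Rightarrow> real) \<Rightarrow> (nat \<Rightarrow> nat \<Rightarrow> real) \<Rightarrow>
   (nat \<Rightarrow> nat \<Rightarrow> real) \<Rightarrow> bool" where
  "offline_feasible M C N D Y x \<longleftrightarrow>
     (\<forall>n<N. x n \<in> Yset M (D n) (Y n)) \<and> (\<forall>m<M. (\<Sum>n<N. x n m) \<le> C m)"

definition total_value ::
  "nat \<Rightarrow> nat \<Rightarrow> (nat \<Rightarrow> real \<Rightarrow> real) \<Rightarrow> (nat \<Rightarrow> nat \<Rightarrow> real) \<Rightarrow> real" where
  "total_value M N g x = (\<Sum>n<N. g n (\<Sum>m<M. x n m))"

definition OPT ::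
  "nat \<Rightarrow> (nat \<Rightarrow> real) \<Rightarrow> nat \<Rightarrow> (nat \<Rightarrow> real) \<Rightarrow> (nat \<Rightarrow> nat \<Rightarrow> real) \<Rightarrow>
   (nat \<Rightarrow> real \<Rightarrow> real) \<Rightarrow> real" where
  "OPT M C N D Y g = Sup (total_value M N g ` {x. offline_feasible M C N D Y x})"

text \<open>The threshold function phi*_m on [0, C_m]; the value +infinity beyond C_m
  is encoded by forbidding allocations exceeding the capacity.\<close>
definition phi_star :: "real \<Rightarrow> real \<Rightarrow> real \<Rightarrow> real \<Rightarrow> real" where
  "phi_star L \<alpha> Cm w =
     (if w < Cm / (\<alpha> - 1) then L else L * exp (\<alpha> / Cm * w - \<alpha> / (\<alpha> - 1)))"

definition ota_choice ::
  "(nat \<Rightarrow> real \<Rightarrow> real) \<Rightarrow> nat \<Rightarrow> (nat \<Rightarrow> real) \<Rightarrow> real \<Rightarrow> (nat \<Rightarrow> real) \<Rightarrow>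
   (real \<Rightarrow> real) \<Rightarrow> (nat \<Rightarrow> real) \<Rightarrow> (nat \<Rightarrow> real) \<Rightarrow> bool" where
  "ota_choice \<phi> M C Dn Yn gn w v \<longleftrightarrow>
     (let F = {u \<in> Yset M Dn Yn. \<forall>m<M. w m + u m \<le> C m};
          obj = (\<lambda>u. gn (\<Sum>m<M. u m) - (\<Sum>m<M. integral {w m .. w m + u m} (\<phi> m)))
      in v \<in> F \<and> (\<forall>u\<in>F. obj u \<le> obj v) \<and>
         (\<forall>u\<in>F. obj u = obj v \<longrightarrow> (\<Sum>m<M. u m) \<le> (\<Sum>m<M. v m)))"

definition ota_run ::
  "(nat \<Rightarrow> real \<Rightarrow> real) \<Rightarrow> nat \<Rightarrow> (nat \<Rightarrow> real) \<Rightarrow> nat \<Rightarrow> (nat \<Rightarrow> real) \<Rightarrow>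
   (nat \<Rightarrow> nat \<Rightarrow> real) \<Rightarrow> (nat \<Rightarrow> real \<Rightarrow> real) \<Rightarrow> (nat \<Rightarrow> nat \<Rightarrow> real) \<Rightarrow> bool" where
  "ota_run \<phi> M C N D Y g y \<longleftrightarrow>
     (\<forall>n<N. ota_choice \<phi> M C (D n) (Y n) (g n) (\<lambda>m. \<Sum>k<n. y k m) (y n))"

text \<open>The competitive ratio sup OPT/ALG over all instances (and all executions,
  i.e. adversarial remaining tie-breaking) equals r; OPT/ALG with ALG = 0 < OPT
  counts as +infinity.  The threshold family may depend on the capacities.\<close>
definition competitive_ratio_is ::
  "real \<Rightarrow> real \<Rightarrow> ((nat \<Rightarrow> real) \<Rightarrow> nat \<Rightarrow> real \<Rightarrow> real) \<Rightarrow> real \<Rightarrow> bool" where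
  "competitive_ratio_is L U \<Phi> r \<longleftrightarrow>
     (\<forall>M C N D Y g y. valid_instance L U M C N D Y g \<and> ota_run (\<Phi> C) M C N D Y g y
        \<longrightarrow> OPT M C N D Y g \<le> r * total_value M N g y) \<and>
     (\<forall>c<r. \<exists>M C N D Y g y. valid_instance L U M C N D Y g \<and> ota_run (\<Phi> C) M C N D Y g y
        \<and> OPT M C N D Y g > c * total_value M N g y)"

end

(*
  Write \<Phi>\<^sub>m for the primitive of \<phi>*\<^sub>m and W\<^sub>m for the final load of knapsack m.

  Upper bound (dual fitting).  OTA maximises the pseudo-utility, and allocating nothing is
  feasible, so every item is worth at least the pseudo-cost it pays; telescoping gives
  \<Sum>\<^sub>m \<Phi>\<^sub>m(W\<^sub>m) \<le> ALG.  Local optimality of OTA's choice (a KKT argument) shows that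
  any allocation x of an item is worth at most the value of OTA's choice plus
  \<Sum>\<^sub>m \<phi>*\<^sub>m(W\<^sub>m) x\<^sub>m over the knapsacks whose final load passes the threshold \<beta>\<^sub>m, minus the
  pseudo-cost paid above the thresholds: if x put more than OTA into a knapsack that stays
  below its threshold, OTA could not have been short of capacity, hence allocated the whole
  item and nothing above a threshold.  Summing over the items, the capacity C\<^sub>m of
  knapsack m turns the prices into C\<^sub>m \<phi>*\<^sub>m(W\<^sub>m) = \<alpha> \<Phi>\<^sub>m(W\<^sub>m) - L \<beta>\<^sub>m, whence
  OPT \<le> ALG + (\<alpha> - 1) \<Sum>\<^sub>m \<Phi>\<^sub>m(W\<^sub>m) \<le> \<alpha> ALG.  The equation defining \<alpha> says exactly
  \<phi>*\<^sub>m(C\<^sub>m) = U, which handles the full knapsacks.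

  Lower bound.  Take two knapsacks of capacity 1.  A first item of size \<beta> = 1/(\<alpha> - 1) and
  value L per unit has pseudo-utility 0 everywhere, and OTA may put it into knapsack 0.  Then
  K items of size h, fitting only into knapsack 0, are priced at the current threshold, so OTA
  takes them and fills knapsack 0; a last item of value U fits only into the full knapsack 0.
  OPT \<ge> L \<beta> + U, while ALG \<le> L \<beta> + (1 + \<alpha> h) (U - L) / \<alpha>, and the ratio tends to \<alpha> as h \<rightarrow> 0.
*)

theory Submission
  imports Defs
begin

lemma concave_on_le_tangent_within:
  fixes g :: "real \<Rightarrow> real"
  assumes conc: "concave_on S g" and der: "(g has_real_derivative d) (at c within S)"
    and c: "c \<in> S" and x: "x \<in> S"
  shows "g x \<le> g c + d * (x - c)"
proof (cases "x = c")
  case False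
  define y where "y = (\<lambda>t::real. c + t * (x - c))"
  have y_in_S: "y t \<in> S" if "0 \<le> t" "t \<le> 1" for t
  proof -
    have "(1 - t) *\<^sub>R c + t *\<^sub>R x \<in> S"
      using concave_on_imp_convex[OF conc] c x that by (intro convexD) auto
    then show ?thesis by (simp add: y_def algebra_simps)
  qed
  have small: "\<forall>\<^sub>F t in at_right 0. 0 < t \<and> t \<le> (1::real)"
    by (simp add: eventually_at_right_field) (rule exI[of _ 1], auto)
  have "filterlim y (at c within S) (at_right 0)"
    unfolding filterlim_at
  proof
    show "\<forall>\<^sub>F t in at_right 0. y t \<in> S \<and> y t \<noteq> c"
      using small by eventually_elim (use y_in_S False in \<open>auto simp: y_def\<close>)
    have "((\<lambda>t. c + t * (x - c)) \<longlongrightarrow> c + 0 * (x - c)) (at_right 0)"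
      by (intro tendsto_intros)
    then show "(y \<longlongrightarrow> c) (at_right 0)" by (simp add: y_def)
  qed
  moreover have "((\<lambda>z. (g z - g c) / (z - c)) \<longlongrightarrow> d) (at c within S)"
    using der by (simp add: has_field_derivative_iff)
  ultimately have "((\<lambda>t. (g (y t) - g c) / (y t - c)) \<longlongrightarrow> d) (at_right 0)"
    using filterlim_compose by blast
  then have "((\<lambda>t. (g (y t) - g c) / (y t - c) * (x - c)) \<longlongrightarrow> d * (x - c)) (at_right 0)"
    by (intro tendsto_intros)
  moreover have "\<forall>\<^sub>F t in at_right 0. g x - g c \<le> (g (y t) - g c) / (y t - c) * (x - c)"
    using small
  proof eventually_elim
    case (elim t)
    have "(1 - t) * g c + t * g x \<le> g ((1 - t) *\<^sub>R c + t *\<^sub>R x)"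
      using concave_onD[OF conc, of t c x] elim c x by auto
    then have "t * (g x - g c) \<le> g (y t) - g c"
      by (simp add: y_def algebra_simps)
    then have "g x - g c \<le> (g (y t) - g c) / t"
      using elim by (simp add: field_simps)
    moreover have "(g (y t) - g c) / (y t - c) * (x - c) = (g (y t) - g c) / t"
      using elim False by (simp add: y_def field_simps)
    ultimately show ?case by simp
  qed
  ultimately have "g x - g c \<le> d * (x - c)"
    by (rule tendsto_lowerbound) simp
  then show ?thesis by simp
qed simp

lemma concave_on_diff_bounds:
  fixes g :: "real \<Rightarrow> real"
  assumes conc: "concave_on S g"
    and der: "\<And>s. s \<in> S \<Longrightarrow> \<exists>d. (g has_real_derivative d) (at s within S) \<and> L \<le> d \<and> d \<le> U"
    and st: "s \<in> S" "t \<in> S" "s \<le> t"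
  shows "L * (t - s) \<le> g t - g s" and "g t - g s \<le> U * (t - s)"
proof -
  obtain d where d: "(g has_real_derivative d) (at t within S)" "L \<le> d"
    using der[OF st(2)] by blast
  have "L * (t - s) \<le> d * (t - s)" using d st by (intro mult_right_mono) auto
  then show "L * (t - s) \<le> g t - g s"
    using concave_on_le_tangent_within[OF conc d(1) st(2,1)] by (simp add: algebra_simps)
next
  obtain d where d: "(g has_real_derivative d) (at s within S)" "d \<le> U"
    using der[OF st(1)] by blast
  have "d * (t - s) \<le> U * (t - s)" using d st by (intro mult_right_mono) auto
  then show "g t - g s \<le> U * (t - s)"
    using concave_on_le_tangent_within[OF conc d(1) st(1,2)] by simp
qed

lemma sum_lessThan_fun_upd:
  fixes f :: "nat \<Rightarrow> 'a \<Rightarrow> 'b::ab_group_add"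
  assumes "m < M"
  shows "(\<Sum>k<M. f k ((v(m := x)) k)) = (\<Sum>k<M. f k (v k)) + (f m x - f m (v m))"
proof -
  have "(\<Sum>k<M. f k ((v(m := x)) k)) - (\<Sum>k<M. f k (v k))
      = (\<Sum>k<M. if k = m then f m x - f m (v m) else 0)"
    by (subst sum_subtractf[symmetric]) (rule sum.cong, auto)
  then show ?thesis
    using assms by (simp add: algebra_simps)
qed

lemma eventually_at_right_add_scaled_le:
  fixes a c d :: real
  assumes "a \<le> c" "a = c \<Longrightarrow> d \<le> 0"
  shows "\<forall>\<^sub>F t in at_right 0. a + t * d \<le> c"
proof (cases "a = c")
  case True
  show ?thesis
    using eventually_at_right_less[of 0] by eventually_elim (use True assms in \<open>auto simp: mult_nonneg_nonpos\<close>)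
next
  case False
  have "((\<lambda>t. a + t * d) \<longlongrightarrow> a + 0 * d) (at_right 0)"
    by (intro tendsto_intros)
  then have "\<forall>\<^sub>F t in at_right 0. a + t * d < c"
    using False assms(1) by (intro order_tendstoD) auto
  then show ?thesis by eventually_elim simp
qed

lemma Yset_convex_combination:
  assumes "u \<in> Yset M D Y" "u' \<in> Yset M D Y" "0 \<le> t" "t \<le> 1"
  shows "(\<lambda>m. (1 - t) * u m + t * u' m) \<in> Yset M D Y"
proof -
  have "(\<Sum>m<M. (1 - t) * u m + t * u' m) = (1 - t) * (\<Sum>m<M. u m) + t * (\<Sum>m<M. u' m)"
    by (simp add: sum.distrib sum_distrib_left)
  then show ?thesis
    using assms unfolding Yset_def by (auto intro!: convex_bound_le)
qed

lemma convex_Yset_totals: "convex ((\<lambda>u. \<Sum>m<M. u m) ` Yset M D Y)"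
proof (rule convexI)
  fix s s' and a b :: real
  assume "s \<in> (\<lambda>u. \<Sum>m<M. u m) ` Yset M D Y" "s' \<in> (\<lambda>u. \<Sum>m<M. u m) ` Yset M D Y"
    and ab: "0 \<le> a" "0 \<le> b" "a + b = 1"
  then obtain u u' where u: "u \<in> Yset M D Y" "u' \<in> Yset M D Y"
    and s: "s = (\<Sum>m<M. u m)" "s' = (\<Sum>m<M. u' m)" by blast
  have "a = 1 - b" using ab by simp
  then have "a *\<^sub>R s + b *\<^sub>R s' = (\<Sum>m<M. (1 - b) * u m + b * u' m)"
    by (simp add: s sum.distrib sum_distrib_left)
  then show "a *\<^sub>R s + b *\<^sub>R s' \<in> (\<lambda>u. \<Sum>m<M. u m) ` Yset M D Y"
    using Yset_convex_combination[OF u, of b] ab by auto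
qed

section \<open>The threshold function\<close>

definition phi_star_primitive :: "real \<Rightarrow> real \<Rightarrow> real \<Rightarrow> real \<Rightarrow> real" where
  "phi_star_primitive L \<alpha> c w = L * min w (c / (\<alpha> - 1)) + c / \<alpha> * (phi_star L \<alpha> c w - L)"

definition cost_above_threshold :: "real \<Rightarrow> real \<Rightarrow> real \<Rightarrow> real \<Rightarrow> real \<Rightarrow> real" where
  "cost_above_threshold L \<alpha> c a b =
     phi_star_primitive L \<alpha> c (max b (c / (\<alpha> - 1))) - phi_star_primitive L \<alpha> c (max a (c / (\<alpha> - 1)))"

lemma sum_cost_above_threshold_telescope:
  "(\<Sum>n<N. cost_above_threshold L \<alpha> c (a n) (a (Suc n))) = cost_above_threshold L \<alpha> c (a 0) (a N)"
  unfolding cost_above_threshold_def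
  by (rule sum_lessThan_telescope[where f = "\<lambda>n. phi_star_primitive L \<alpha> c (max (a n) (c / (\<alpha> - 1)))"])

locale threshold =
  fixes L \<alpha> :: real
  assumes L_pos: "0 < L" and alpha_gt_1: "1 < \<alpha>"
begin

lemma phi_star_exponent_nonpos_iff:
  assumes "0 < c"
  shows "\<alpha> / c * w - \<alpha> / (\<alpha> - 1) \<le> 0 \<longleftrightarrow> w \<le> c / (\<alpha> - 1)"
proof -
  have "\<alpha> / c * w - \<alpha> / (\<alpha> - 1) = \<alpha> / c * (w - c / (\<alpha> - 1))"
    using assms by (simp add: field_simps)
  moreover have "0 < \<alpha> / c" using assms alpha_gt_1 by simp
  ultimately show ?thesis
    by (smt (verit) mult_le_0_iff mult_pos_pos)
qed

lemma phi_star_eq_exp_max: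
  "0 < c \<Longrightarrow> phi_star L \<alpha> c w = L * exp (max 0 (\<alpha> / c * w - \<alpha> / (\<alpha> - 1)))"
  using phi_star_exponent_nonpos_iff[of c w] by (auto simp: phi_star_def max_def)

lemma phi_star_below_threshold: "0 < c \<Longrightarrow> w \<le> c / (\<alpha> - 1) \<Longrightarrow> phi_star L \<alpha> c w = L"
  by (cases "w < c / (\<alpha> - 1)") (auto simp: phi_star_def)

lemma phi_star_above_threshold: "0 < c \<Longrightarrow> c / (\<alpha> - 1) < w \<Longrightarrow> L < phi_star L \<alpha> c w"
  using phi_star_exponent_nonpos_iff[of c w] L_pos by (auto simp: phi_star_def)

lemma phi_star_ge_L: "0 < c \<Longrightarrow> L \<le> phi_star L \<alpha> c w"
  using L_pos by (simp add: phi_star_eq_exp_max)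

lemma phi_star_mono:
  assumes "0 < c" "a \<le> b"
  shows "phi_star L \<alpha> c a \<le> phi_star L \<alpha> c b"
proof -
  have "\<alpha> / c * a \<le> \<alpha> / c * b"
    using assms alpha_gt_1 by (intro mult_left_mono) auto
  then show ?thesis
    using assms(1) L_pos by (simp only: phi_star_eq_exp_max) simp
qed

lemma continuous_phi_star:
  assumes "0 < c"
  shows "isCont (phi_star L \<alpha> c) w"
proof -
  have "phi_star L \<alpha> c = (\<lambda>w. L * exp (max 0 (\<alpha> / c * w - \<alpha> / (\<alpha> - 1))))"
    using assms by (intro ext phi_star_eq_exp_max)
  then show ?thesis by (simp only:) (intro continuous_intros)
qed


lemma continuous_on_phi_star_primitive: "0 < c \<Longrightarrow> continuous_on A (phi_star_primitive L \<alpha> c)"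
  unfolding phi_star_primitive_def
  by (intro continuous_intros continuous_at_imp_continuous_on ballI continuous_phi_star)

lemma phi_star_primitive_has_derivative:
  assumes c: "0 < c" and w: "w \<noteq> c / (\<alpha> - 1)"
  shows "(phi_star_primitive L \<alpha> c has_real_derivative phi_star L \<alpha> c w) (at w)"
proof (cases "w < c / (\<alpha> - 1)")
  case True
  have "((\<lambda>u. L * u) has_real_derivative phi_star L \<alpha> c w) (at w)"
    using True c by (auto intro!: derivative_eq_intros simp: phi_star_below_threshold)
  then show ?thesis
  proof (rule has_field_derivative_transform_within_open[where S = "{..< c / (\<alpha> - 1)}"])
    show "L * u = phi_star_primitive L \<alpha> c u" if "u \<in> {..<c / (\<alpha> - 1)}" for u
      using that c by (simp add: phi_star_primitive_def phi_star_below_threshold)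
  qed (use True in auto)
next
  case False
  then have w: "c / (\<alpha> - 1) < w" using w by simp
  let ?f = "\<lambda>u. L * (c / (\<alpha> - 1)) + c / \<alpha> * (L * exp (\<alpha> / c * u - \<alpha> / (\<alpha> - 1)) - L)"
  have "(?f has_real_derivative c / \<alpha> * (L * exp (\<alpha> / c * w - \<alpha> / (\<alpha> - 1)) * (\<alpha> / c))) (at w)"
    by (auto intro!: derivative_eq_intros)
  moreover have "c / \<alpha> * (L * exp (\<alpha> / c * w - \<alpha> / (\<alpha> - 1)) * (\<alpha> / c)) = phi_star L \<alpha> c w"
    using w c alpha_gt_1 by (simp add: phi_star_def)
  ultimately have "(?f has_real_derivative phi_star L \<alpha> c w) (at w)" by simp
  then show ?thesis
  proof (rule has_field_derivative_transform_within_open[where S = "{c / (\<alpha> - 1)<..}"])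
    show "?f u = phi_star_primitive L \<alpha> c u" if "u \<in> {c / (\<alpha> - 1)<..}" for u
      using that by (simp add: phi_star_primitive_def phi_star_def)
  qed (use w in auto)
qed

lemma phi_star_has_integral:
  assumes "0 < c" "a \<le> b"
  shows "(phi_star L \<alpha> c has_integral phi_star_primitive L \<alpha> c b - phi_star_primitive L \<alpha> c a) {a..b}"
proof (rule fundamental_theorem_of_calculus_interior_strong[where S = "{c / (\<alpha> - 1)}"])
  show "(phi_star_primitive L \<alpha> c has_vector_derivative phi_star L \<alpha> c w) (at w)"
    if "w \<in> {a<..<b} - {c / (\<alpha> - 1)}" for w
    using that assms phi_star_primitive_has_derivative[of c w]
    by (simp add: has_real_derivative_iff_has_vector_derivative)
qed (use assms continuous_on_phi_star_primitive in auto)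

lemma integral_phi_star:
  "0 < c \<Longrightarrow> a \<le> b \<Longrightarrow>
    integral {a..b} (phi_star L \<alpha> c) = phi_star_primitive L \<alpha> c b - phi_star_primitive L \<alpha> c a"
  using phi_star_has_integral by blast

lemma phi_star_primitive_diff_bounds:
  assumes c: "0 < c" and ab: "a \<le> b"
  shows "(b - a) * phi_star L \<alpha> c a \<le> phi_star_primitive L \<alpha> c b - phi_star_primitive L \<alpha> c a"
    and "phi_star_primitive L \<alpha> c b - phi_star_primitive L \<alpha> c a \<le> (b - a) * phi_star L \<alpha> c b"
proof -
  have const: "((\<lambda>_. phi_star L \<alpha> c u) has_integral (b - a) * phi_star L \<alpha> c u) {a..b}" for u
    using has_integral_const_real[of "phi_star L \<alpha> c u" a b] ab by simp
  show "(b - a) * phi_star L \<alpha> c a \<le> phi_star_primitive L \<alpha> c b - phi_star_primitive L \<alpha> c a"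
    by (rule has_integral_le[OF const phi_star_has_integral[OF c ab]]) (simp add: c phi_star_mono)
  show "phi_star_primitive L \<alpha> c b - phi_star_primitive L \<alpha> c a \<le> (b - a) * phi_star L \<alpha> c b"
    by (rule has_integral_le[OF phi_star_has_integral[OF c ab] const]) (simp add: c phi_star_mono)
qed

lemma phi_star_primitive_diff_le:
  "0 < c \<Longrightarrow> phi_star_primitive L \<alpha> c y - phi_star_primitive L \<alpha> c x \<le> (y - x) * phi_star L \<alpha> c y"
  using phi_star_primitive_diff_bounds[of c x y] phi_star_primitive_diff_bounds[of c y x]
  by (cases "x \<le> y") (auto simp: algebra_simps)

lemma phi_star_primitive_below_threshold:
  "0 < c \<Longrightarrow> w \<le> c / (\<alpha> - 1) \<Longrightarrow> phi_star_primitive L \<alpha> c w = L * w"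
  by (simp add: phi_star_primitive_def phi_star_below_threshold)

lemma phi_star_primitive_above_threshold:
  "0 < c \<Longrightarrow> c / (\<alpha> - 1) \<le> w \<Longrightarrow>
    \<alpha> * phi_star_primitive L \<alpha> c w = c * phi_star L \<alpha> c w + L * (c / (\<alpha> - 1))"
  using alpha_gt_1 by (simp add: phi_star_primitive_def field_simps)

lemma phi_star_primitive_nonneg:
  assumes "0 < c" "0 \<le> w"
  shows "0 \<le> phi_star_primitive L \<alpha> c w"
proof -
  have "0 \<le> w * phi_star L \<alpha> c 0"
    using assms phi_star_ge_L[of c 0] L_pos by simp
  also have "\<dots> \<le> phi_star_primitive L \<alpha> c w - phi_star_primitive L \<alpha> c 0"
    using phi_star_primitive_diff_bounds(1)[of c 0 w] assms by simp
  finally show ?thesis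
    using assms alpha_gt_1 by (simp add: phi_star_primitive_below_threshold)
qed

lemma phi_star_primitive_zero: "0 < c \<Longrightarrow> phi_star_primitive L \<alpha> c 0 = 0"
  using alpha_gt_1 by (simp add: phi_star_primitive_below_threshold)

lemma cost_above_threshold_le:
  assumes "0 < c" "0 \<le> v"
  shows "cost_above_threshold L \<alpha> c w (w + v) \<le> v * phi_star L \<alpha> c (w + v)"
proof (cases "w + v \<le> c / (\<alpha> - 1)")
  case True
  then show ?thesis
    using assms phi_star_ge_L[of c "w + v"] L_pos by (simp add: cost_above_threshold_def max_def)
next
  case False
  have "cost_above_threshold L \<alpha> c w (w + v)
      \<le> (w + v - max w (c / (\<alpha> - 1))) * phi_star L \<alpha> c (w + v)"
    using False phi_star_primitive_diff_le[OF assms(1)] by (simp add: cost_above_threshold_def)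
  also have "\<dots> \<le> v * phi_star L \<alpha> c (w + v)"
    using False assms phi_star_ge_L[of c "w + v"] L_pos by (intro mult_right_mono) auto
  finally show ?thesis .
qed

end

locale competitive_threshold = threshold +
  fixes U :: real
  assumes L_le_U: "L \<le> U"
    and alpha_eq: "\<alpha> - 1 - 1 / (\<alpha> - 1) = ln (U / L)"
begin

lemma alpha_ge_2: "2 \<le> \<alpha>"
proof -
  have "0 \<le> ln (U / L)" using L_pos L_le_U by simp
  then have "1 / (\<alpha> - 1) \<le> \<alpha> - 1" using alpha_eq by simp
  then have "1 \<le> (\<alpha> - 1) * (\<alpha> - 1)" using alpha_gt_1 by (simp add: field_simps)
  then show ?thesis
    using mult_strict_mono[of "\<alpha> - 1" 1 "\<alpha> - 1" 1] alpha_gt_1 by fastforce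
qed

lemma threshold_le_capacity: "0 < c \<Longrightarrow> c / (\<alpha> - 1) \<le> c"
  using alpha_ge_2 by (simp add: field_simps)

lemma phi_star_at_capacity:
  assumes "0 < c"
  shows "phi_star L \<alpha> c c = U"
proof -
  have "\<alpha> / c * c - \<alpha> / (\<alpha> - 1) = \<alpha> - 1 - 1 / (\<alpha> - 1)"
    using assms alpha_gt_1 by (simp add: field_simps)
  then have "\<alpha> / c * c - \<alpha> / (\<alpha> - 1) = ln (U / L)"
    using alpha_eq by simp
  moreover have "0 \<le> ln (U / L)" using L_pos L_le_U by simp
  ultimately show ?thesis
    using assms L_pos L_le_U by (simp add: phi_star_eq_exp_max)
qed

lemma dual_price_bound:
  assumes c: "0 < c" and W: "0 \<le> W" and X: "X \<le> c"
  shows "(if c / (\<alpha> - 1) \<le> W then phi_star L \<alpha> c W else 0) * X - cost_above_threshold L \<alpha> c 0 W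
    \<le> (\<alpha> - 1) * phi_star_primitive L \<alpha> c W"
proof (cases "c / (\<alpha> - 1) \<le> W")
  case True
  have "phi_star L \<alpha> c W * X \<le> phi_star L \<alpha> c W * c"
    using X phi_star_ge_L[OF c, of W] L_pos by (intro mult_left_mono) auto
  moreover have "cost_above_threshold L \<alpha> c 0 W = phi_star_primitive L \<alpha> c W - L * (c / (\<alpha> - 1))"
    using True c alpha_gt_1 by (simp add: cost_above_threshold_def phi_star_primitive_below_threshold)
  ultimately show ?thesis
    using True phi_star_primitive_above_threshold[OF c True] by (simp add: algebra_simps)
next
  case False
  then show ?thesis
    using phi_star_primitive_nonneg[OF c W] alpha_gt_1 c
    by (simp add: cost_above_threshold_def max_def)
qed

end

section \<open>One step of OTA\<close>

locale ota_step = competitive_threshold +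
  fixes M :: nat and C :: "nat \<Rightarrow> real" and Dn :: real and Yn :: "nat \<Rightarrow> real"
    and gn :: "real \<Rightarrow> real" and w v :: "nat \<Rightarrow> real"
  assumes capacity_pos: "\<And>m. m < M \<Longrightarrow> 0 < C m"
    and assumption_B: "assumptionB L U M Dn Yn gn"
    and choice: "ota_choice (\<lambda>m. phi_star L \<alpha> (C m)) M C Dn Yn gn w v"
begin

abbreviation "\<beta> m \<equiv> C m / (\<alpha> - 1)"
abbreviation "\<phi> m \<equiv> phi_star L \<alpha> (C m)"
abbreviation "\<Phi> m \<equiv> phi_star_primitive L \<alpha> (C m)"
abbreviation "totals \<equiv> (\<lambda>u. \<Sum>m<M. u m) ` Yset M Dn Yn"
abbreviation "fits u \<equiv> \<forall>m<M. w m + u m \<le> C m"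

lemma Yset_sum_in_totals: "u \<in> Yset M Dn Yn \<Longrightarrow> (\<Sum>m<M. u m) \<in> totals"
  by blast

lemma gn_mono: "mono_on totals gn"
  and gn_concave: "concave_on totals gn"
  and gn_zero: "gn 0 = 0"
  and gn_derivative: "\<And>s. s \<in> totals \<Longrightarrow> \<exists>d. (gn has_real_derivative d) (at s within totals) \<and> L \<le> d \<and> d \<le> U"
  and demand_pos: "0 < Dn"
  and rate_limit_nonneg: "\<And>m. m < M \<Longrightarrow> 0 \<le> Yn m"
  using assumption_B unfolding assumptionB_def Let_def by auto

lemma gn_diff_bounds:
  assumes "u \<in> Yset M Dn Yn" "u' \<in> Yset M Dn Yn" "(\<Sum>m<M. u m) \<le> (\<Sum>m<M. u' m)"
  shows "L * ((\<Sum>m<M. u' m) - (\<Sum>m<M. u m)) \<le> gn (\<Sum>m<M. u' m) - gn (\<Sum>m<M. u m)"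
    and "gn (\<Sum>m<M. u' m) - gn (\<Sum>m<M. u m) \<le> U * ((\<Sum>m<M. u' m) - (\<Sum>m<M. u m))"
  using concave_on_diff_bounds[OF gn_concave gn_derivative] assms by (auto intro: Yset_sum_in_totals)

lemma pseudo_cost_eq:
  assumes "u \<in> Yset M Dn Yn"
  shows "(\<Sum>m<M. integral {w m..w m + u m} (\<phi> m)) = (\<Sum>m<M. \<Phi> m (w m + u m) - \<Phi> m (w m))"
  using assms capacity_pos unfolding Yset_def by (intro sum.cong) (auto simp: integral_phi_star)

lemma choice_feasible: "v \<in> Yset M Dn Yn" "fits v"
  using choice unfolding ota_choice_def Let_def by auto

lemma choice_nonneg: "m < M \<Longrightarrow> 0 \<le> v m"
  and choice_le_rate_limit: "m < M \<Longrightarrow> v m \<le> Yn m"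
  and choice_sum_le_demand: "(\<Sum>m<M. v m) \<le> Dn"
  using choice_feasible(1) unfolding Yset_def by auto

lemma choice_optimal:
  assumes "u \<in> Yset M Dn Yn" "fits u"
  shows "gn (\<Sum>m<M. u m) - gn (\<Sum>m<M. v m) \<le> (\<Sum>m<M. \<Phi> m (w m + u m) - \<Phi> m (w m + v m))"
  using choice assms pseudo_cost_eq[OF assms(1)] pseudo_cost_eq[OF choice_feasible(1)]
  unfolding ota_choice_def Let_def by (auto simp: sum_subtractf)

lemma choice_tie_break:
  assumes "u \<in> Yset M Dn Yn" "fits u"
    and "(\<Sum>m<M. \<Phi> m (w m + u m) - \<Phi> m (w m + v m)) \<le> gn (\<Sum>m<M. u m) - gn (\<Sum>m<M. v m)"
  shows "(\<Sum>m<M. u m) \<le> (\<Sum>m<M. v m)"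
proof -
  have "gn (\<Sum>m<M. u m) - (\<Sum>m<M. \<Phi> m (w m + u m) - \<Phi> m (w m))
      = gn (\<Sum>m<M. v m) - (\<Sum>m<M. \<Phi> m (w m + v m) - \<Phi> m (w m))"
    using choice_optimal[OF assms(1,2)] assms(3) by (simp add: sum_subtractf)
  then show ?thesis
    using choice assms(1,2) pseudo_cost_eq[OF assms(1)] pseudo_cost_eq[OF choice_feasible(1)]
    unfolding ota_choice_def Let_def by auto
qed

lemma value_ge_pseudo_cost: "(\<Sum>m<M. \<Phi> m (w m + v m) - \<Phi> m (w m)) \<le> gn (\<Sum>m<M. v m)"
proof -
  have "(\<lambda>_. 0) \<in> Yset M Dn Yn"
    using demand_pos rate_limit_nonneg unfolding Yset_def by auto
  moreover have "fits (\<lambda>_. 0)"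
    using choice_feasible(2) choice_nonneg by (smt (verit))
  ultimately show ?thesis
    using choice_optimal[of "\<lambda>_. 0"] gn_zero by (simp add: sum_subtractf)
qed

lemma sum_eq_demand_if_room_below_threshold:
  assumes m: "m < M" and below: "w m + v m < \<beta> m" and room: "v m < Yn m"
  shows "(\<Sum>k<M. v k) = Dn"
proof (rule ccontr)
  assume "(\<Sum>k<M. v k) \<noteq> Dn"
  then have short: "(\<Sum>k<M. v k) < Dn" using choice_sum_le_demand by simp
  define e where "e = min (Dn - (\<Sum>k<M. v k)) (min (Yn m - v m) (\<beta> m - (w m + v m)))"
  have e: "0 < e" "e \<le> Dn - (\<Sum>k<M. v k)" "e \<le> Yn m - v m" "e \<le> \<beta> m - (w m + v m)"
    using short room below by (auto simp: e_def)
  define z where "z = v(m := v m + e)"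
  have sum_z: "(\<Sum>k<M. z k) = (\<Sum>k<M. v k) + e"
    using sum_lessThan_fun_upd[OF m, of "\<lambda>_ r. r" v "v m + e"] by (simp add: z_def)
  have z: "z \<in> Yset M Dn Yn"
    using choice_feasible(1) m e sum_z unfolding Yset_def by (auto simp: z_def)
  have "fits z"
    using choice_feasible(2) m e threshold_le_capacity[OF capacity_pos[OF m]] by (auto simp: z_def)
  moreover have "(\<Sum>k<M. \<Phi> k (w k + z k) - \<Phi> k (w k + v k)) = \<Phi> m (w m + v m + e) - \<Phi> m (w m + v m)"
    using sum_lessThan_fun_upd[OF m, of "\<lambda>k r. \<Phi> k (w k + r) - \<Phi> k (w k + v k)" v "v m + e"]
    by (simp add: z_def add.assoc)
  moreover have "\<Phi> m (w m + v m + e) - \<Phi> m (w m + v m) = L * e"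
    using e below capacity_pos[OF m] by (simp add: phi_star_primitive_below_threshold algebra_simps)
  moreover have "L * e \<le> gn (\<Sum>k<M. z k) - gn (\<Sum>k<M. v k)"
    using gn_diff_bounds(1)[OF choice_feasible(1) z] sum_z e by simp
  ultimately have "(\<Sum>k<M. z k) \<le> (\<Sum>k<M. v k)"
    using choice_tie_break[OF z] by simp
  then show False using sum_z e by simp
qed

lemma shift_allocation_feasible:
  assumes m: "m < M" and m': "m' < M" "m' \<noteq> m"
    and e: "0 \<le> e" "e \<le> v m'" "v m + e \<le> Yn m" "w m + v m + e \<le> C m"
  defines "z \<equiv> v(m := v m + e, m' := v m' - e)"
  shows "z \<in> Yset M Dn Yn" and "fits z" and "(\<Sum>k<M. z k) = (\<Sum>k<M. v k)"
proof -
  show sum_z: "(\<Sum>k<M. z k) = (\<Sum>k<M. v k)"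
    using sum_lessThan_fun_upd[OF m'(1), of "\<lambda>_ r. r" "v(m := v m + e)"]
      sum_lessThan_fun_upd[OF m, of "\<lambda>_ r. r" v] \<open>m' \<noteq> m\<close> by (simp add: z_def)
  show "z \<in> Yset M Dn Yn"
    unfolding Yset_def
  proof (intro CollectI conjI allI impI)
    fix k assume "k < M"
    then show "0 \<le> z k" "z k \<le> Yn k"
      using choice_nonneg choice_le_rate_limit choice_le_rate_limit[OF m'(1)] e \<open>m' \<noteq> m\<close>
      by (auto simp: z_def)
  next
    fix k assume "M \<le> k"
    then show "z k = 0"
      using choice_feasible(1) m m' unfolding Yset_def by (auto simp: z_def)
  qed (use sum_z choice_sum_le_demand in simp)
  show "fits z"
    using choice_feasible(2) e \<open>m' \<noteq> m\<close> by (auto simp: z_def)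
qed

text \<open>Moving a little allocation from knapsack \<open>m'\<close>, which is filled beyond its threshold,
  to a knapsack \<open>m\<close> still below its threshold would lower the pseudo-cost.\<close>

lemma no_allocation_above_threshold_if_room_below:
  assumes m: "m < M" and below: "w m + v m < \<beta> m" and room: "v m < Yn m"
    and m': "m' < M" and above: "\<beta> m' < w m' + v m'"
  shows "v m' = 0"
proof (rule ccontr)
  assume "v m' \<noteq> 0"
  then have pos: "0 < v m'" using choice_nonneg[OF m'] by simp
  have "m' \<noteq> m" using above below choice_nonneg by auto
  define gap where "gap = w m' + v m' - \<beta> m'"
  define e where "e = min (v m') (min (gap / 2) (min (Yn m - v m) (\<beta> m - (w m + v m))))"
  have e: "0 < e" "e \<le> v m'" "e \<le> Yn m - v m" "e \<le> \<beta> m - (w m + v m)"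
    using pos above room below by (auto simp: e_def gap_def)
  have "e \<le> gap / 2"
    unfolding e_def by (intro min.coboundedI2 min.cobounded1)
  moreover have "0 < gap"
    using above by (simp add: gap_def)
  ultimately have "e < gap" by linarith
  then have e_above: "\<beta> m' < w m' + v m' - e"
    by (simp add: gap_def algebra_simps)
  define z where "z = v(m := v m + e, m' := v m' - e)"
  have z: "z \<in> Yset M Dn Yn" "fits z" "(\<Sum>k<M. z k) = (\<Sum>k<M. v k)"
    using shift_allocation_feasible[OF m m' \<open>m' \<noteq> m\<close>, of e] e
      threshold_le_capacity[OF capacity_pos[OF m]] unfolding z_def by auto
  have "0 \<le> (\<Sum>k<M. \<Phi> k (w k + z k) - \<Phi> k (w k + v k))"
    using choice_optimal[OF z(1,2)] z(3) by simp
  also have "\<dots> = (\<Phi> m (w m + v m + e) - \<Phi> m (w m + v m))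
      + (\<Phi> m' (w m' + v m' - e) - \<Phi> m' (w m' + v m'))"
    using sum_lessThan_fun_upd[OF m', of "\<lambda>k r. \<Phi> k (w k + r) - \<Phi> k (w k + v k)" "v(m := v m + e)"]
      sum_lessThan_fun_upd[OF m, of "\<lambda>k r. \<Phi> k (w k + r) - \<Phi> k (w k + v k)" v] \<open>m' \<noteq> m\<close>
    by (simp add: z_def add.assoc add_diff_eq)
  also have "\<dots> \<le> L * e - e * \<phi> m' (w m' + v m' - e)"
  proof -
    have "\<Phi> m (w m + v m + e) - \<Phi> m (w m + v m) = L * e"
      using e below capacity_pos[OF m] by (simp add: phi_star_primitive_below_threshold algebra_simps)
    moreover have "e * \<phi> m' (w m' + v m' - e) \<le> \<Phi> m' (w m' + v m') - \<Phi> m' (w m' + v m' - e)"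
      using phi_star_primitive_diff_bounds(1)[OF capacity_pos[OF m'], of "w m' + v m' - e" "w m' + v m'"] e
      by simp
    ultimately show ?thesis by simp
  qed
  also have "\<dots> < 0"
    using phi_star_above_threshold[OF capacity_pos[OF m'] e_above] e by simp
  finally show False by simp
qed

lemma choice_directional_bound:
  assumes x: "x \<in> Yset M Dn Yn" and t: "0 < t" "t \<le> 1"
    and fits: "\<And>m. m < M \<Longrightarrow> w m + v m + t * (x m - v m) \<le> C m"
  shows "gn (\<Sum>m<M. x m) - gn (\<Sum>m<M. v m) \<le> (\<Sum>m<M. (x m - v m) * \<phi> m (w m + v m + t * (x m - v m)))"
proof -
  define z where "z m = (1 - t) * v m + t * x m" for m
  have z_shift: "z m = v m + t * (x m - v m)" for m
    by (simp add: z_def algebra_simps)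
  have z: "z \<in> Yset M Dn Yn"
    unfolding z_def[abs_def] using Yset_convex_combination[OF choice_feasible(1) x] t by simp
  have "(\<Sum>m<M. z m) = (1 - t) * (\<Sum>m<M. v m) + t * (\<Sum>m<M. x m)"
    by (simp add: z_def sum.distrib sum_distrib_left)
  then have "(1 - t) * gn (\<Sum>m<M. v m) + t * gn (\<Sum>m<M. x m) \<le> gn (\<Sum>m<M. z m)"
    using concave_onD[OF gn_concave, of t "\<Sum>m<M. v m" "\<Sum>m<M. x m"] t
      Yset_sum_in_totals[OF choice_feasible(1)] Yset_sum_in_totals[OF x]
    by simp
  then have "t * (gn (\<Sum>m<M. x m) - gn (\<Sum>m<M. v m)) \<le> gn (\<Sum>m<M. z m) - gn (\<Sum>m<M. v m)"
    by (simp add: algebra_simps)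
  also have "\<dots> \<le> (\<Sum>m<M. \<Phi> m (w m + z m) - \<Phi> m (w m + v m))"
    using choice_optimal[OF z] fits by (simp add: z_shift add.assoc)
  also have "\<dots> \<le> (\<Sum>m<M. (z m - v m) * \<phi> m (w m + z m))"
  proof (rule sum_mono)
    fix m assume "m \<in> {..<M}"
    then show "\<Phi> m (w m + z m) - \<Phi> m (w m + v m) \<le> (z m - v m) * \<phi> m (w m + z m)"
      using phi_star_primitive_diff_le[of "C m" "w m + z m" "w m + v m"] capacity_pos[of m] by simp
  qed
  also have "\<dots> = t * (\<Sum>m<M. (x m - v m) * \<phi> m (w m + v m + t * (x m - v m)))"
    by (simp add: z_shift sum_distrib_left add.assoc mult.assoc)
  finally show ?thesis using t by simp
qed

lemma marginal_bound_if_full_not_increased: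
  assumes x: "x \<in> Yset M Dn Yn" and full: "\<And>m. m < M \<Longrightarrow> w m + v m = C m \<Longrightarrow> x m \<le> v m"
  shows "gn (\<Sum>m<M. x m) - gn (\<Sum>m<M. v m) \<le> (\<Sum>m<M. (x m - v m) * \<phi> m (w m + v m))"
proof -
  define R where "R t = (\<Sum>m<M. (x m - v m) * \<phi> m (w m + v m + t * (x m - v m)))" for t
  have "\<forall>\<^sub>F t in at_right 0. \<forall>m\<in>{..<M}. w m + v m + t * (x m - v m) \<le> C m"
    using choice_feasible(2) full
    by (intro eventually_ball_finite ballI eventually_at_right_add_scaled_le) auto
  moreover have "\<forall>\<^sub>F t in at_right 0. 0 < t \<and> t \<le> (1::real)"
    by (simp add: eventually_at_right_field) (rule exI[of _ 1], auto)
  ultimately have "\<forall>\<^sub>F t in at_right 0. gn (\<Sum>m<M. x m) - gn (\<Sum>m<M. v m) \<le> R t"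
    by eventually_elim (use choice_directional_bound[OF x] in \<open>auto simp: R_def\<close>)
  moreover have "(R \<longlongrightarrow> R 0) (at_right 0)"
    unfolding R_def using capacity_pos
    by (intro tendsto_intros isCont_tendsto_compose[OF continuous_phi_star]) auto
  ultimately have "gn (\<Sum>m<M. x m) - gn (\<Sum>m<M. v m) \<le> R 0"
    using tendsto_lowerbound by (metis trivial_limit_at_right_real)
  then show ?thesis by (simp add: R_def)
qed

text \<open>On a full knapsack the threshold equals \<open>U\<close>, the largest possible marginal value, so
  decreasing the comparison allocation there to \<open>v\<close> is paid for by the right-hand side.\<close>

lemma marginal_bound:
  assumes x: "x \<in> Yset M Dn Yn"
  shows "gn (\<Sum>m<M. x m) - gn (\<Sum>m<M. v m) \<le> (\<Sum>m<M. (x m - v m) * \<phi> m (w m + v m))"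
proof -
  define x' where "x' m = (if w m + v m = C m then min (x m) (v m) else x m)" for m
  have x'_le: "0 \<le> x' m \<and> x' m \<le> x m" if "m < M" for m
    using x choice_nonneg that unfolding Yset_def by (auto simp: x'_def)
  have sum_le: "(\<Sum>m<M. x' m) \<le> (\<Sum>m<M. x m)"
    using x'_le by (intro sum_mono) auto
  have x': "x' \<in> Yset M Dn Yn"
    unfolding Yset_def
  proof (intro CollectI conjI allI impI)
    fix m assume "m < M"
    then show "0 \<le> x' m" "x' m \<le> Yn m"
      using x'_le[of m] x unfolding Yset_def by auto
  next
    fix m assume "M \<le> m"
    then show "x' m = 0"
      using x choice_feasible(1) unfolding Yset_def by (simp add: x'_def)
  qed (use sum_le x in \<open>simp add: Yset_def\<close>)
  have "gn (\<Sum>m<M. x m) - gn (\<Sum>m<M. x' m) \<le> U * ((\<Sum>m<M. x m) - (\<Sum>m<M. x' m))"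
    using gn_diff_bounds(2)[OF x' x sum_le] .
  also have "\<dots> = (\<Sum>m<M. (x m - x' m) * \<phi> m (w m + v m))"
    unfolding sum_subtractf[symmetric] sum_distrib_left
  proof (rule sum.cong)
    fix m assume "m \<in> {..<M}"
    then show "U * (x m - x' m) = (x m - x' m) * \<phi> m (w m + v m)"
      using phi_star_at_capacity[OF capacity_pos, of m] by (cases "w m + v m = C m") (auto simp: x'_def)
  qed simp
  finally have "gn (\<Sum>m<M. x m) - gn (\<Sum>m<M. x' m) \<le> (\<Sum>m<M. (x m - x' m) * \<phi> m (w m + v m))" .
  moreover have "gn (\<Sum>m<M. x' m) - gn (\<Sum>m<M. v m) \<le> (\<Sum>m<M. (x' m - v m) * \<phi> m (w m + v m))"
    using x' by (rule marginal_bound_if_full_not_increased) (simp add: x'_def)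
  moreover have "(\<Sum>m<M. (x m - x' m) * \<phi> m (w m + v m)) + (\<Sum>m<M. (x' m - v m) * \<phi> m (w m + v m))
      = (\<Sum>m<M. (x m - v m) * \<phi> m (w m + v m))"
    by (simp add: sum.distrib[symmetric] algebra_simps)
  ultimately show ?thesis by linarith
qed

lemma cost_above_threshold_eq_0_if_room_below:
  assumes m: "m < M" and below: "w m + v m < \<beta> m" and room: "v m < Yn m" and k: "k < M"
  shows "cost_above_threshold L \<alpha> (C k) (w k) (w k + v k) = 0"
proof (cases "\<beta> k < w k + v k")
  case True
  then have "v k = 0"
    using no_allocation_above_threshold_if_room_below[OF m below room k] by simp
  then show ?thesis by (simp add: cost_above_threshold_def)
next
  case False
  then show ?thesis
    using choice_nonneg[OF k] by (simp add: cost_above_threshold_def max_def)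
qed

lemma marginal_term_le:
  assumes m: "m < M" and x: "0 \<le> x" and W: "w m + v m \<le> W" and cheap: "W < \<beta> m \<Longrightarrow> x \<le> v m"
  shows "(x - v m) * \<phi> m (w m + v m)
    \<le> (if \<beta> m \<le> W then \<phi> m W else 0) * x - cost_above_threshold L \<alpha> (C m) (w m) (w m + v m)"
proof (cases "\<beta> m \<le> W")
  case True
  have "x * \<phi> m (w m + v m) \<le> x * \<phi> m W"
    using phi_star_mono[OF capacity_pos[OF m] W] x by (rule mult_left_mono)
  then show ?thesis
    using True cost_above_threshold_le[OF capacity_pos[OF m] choice_nonneg[OF m], of "w m"]
    by (simp add: algebra_simps)
next
  case False
  then have "x \<le> v m" "w m + v m \<le> \<beta> m"
    using cheap W by (simp_all add: not_le)
  then show ?thesis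
    using False choice_nonneg[OF m] capacity_pos[OF m] L_pos
    by (simp add: phi_star_below_threshold cost_above_threshold_def max_def mult_nonpos_nonneg)
qed

text \<open>Dual fitting: the dual price of knapsack \<open>m\<close> is \<open>\<phi>\<^sub>m(W\<^sub>m)\<close> if its final load
  \<open>W\<^sub>m\<close> passes the threshold and \<open>0\<close> otherwise.\<close>

lemma item_bound:
  assumes x: "x \<in> Yset M Dn Yn" and W: "\<And>m. m < M \<Longrightarrow> w m + v m \<le> W m"
  shows "gn (\<Sum>m<M. x m) \<le> gn (\<Sum>m<M. v m) + (\<Sum>m<M. (if \<beta> m \<le> W m then \<phi> m (W m) else 0) * x m)
    - (\<Sum>m<M. cost_above_threshold L \<alpha> (C m) (w m) (w m + v m))"
proof (cases "\<exists>m<M. W m < \<beta> m \<and> v m < x m")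
  case True
  then obtain m where m: "m < M" "W m < \<beta> m" "v m < x m" by blast
  have room: "v m < Yn m" using m x unfolding Yset_def by force
  have below: "w m + v m < \<beta> m" using W[OF m(1)] m(2) by simp
  have "gn (\<Sum>k<M. x k) \<le> gn (\<Sum>k<M. v k)"
    using mono_onD[OF gn_mono Yset_sum_in_totals[OF x] Yset_sum_in_totals[OF choice_feasible(1)]] x
      sum_eq_demand_if_room_below_threshold[OF m(1) below room] unfolding Yset_def by simp
  moreover have "0 \<le> (\<Sum>k<M. (if \<beta> k \<le> W k then \<phi> k (W k) else 0) * x k)"
    using x phi_star_ge_L[OF capacity_pos] L_pos unfolding Yset_def
    by (intro sum_nonneg) (simp add: order.trans[OF less_imp_le[OF L_pos]])
  ultimately show ?thesis
    using cost_above_threshold_eq_0_if_room_below[OF m(1) below room] by simp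
next
  case False
  have "gn (\<Sum>m<M. x m) - gn (\<Sum>m<M. v m) \<le> (\<Sum>m<M. (x m - v m) * \<phi> m (w m + v m))"
    using marginal_bound[OF x] .
  also have "\<dots> \<le> (\<Sum>m<M. (if \<beta> m \<le> W m then \<phi> m (W m) else 0) * x m
      - cost_above_threshold L \<alpha> (C m) (w m) (w m + v m))"
  proof (rule sum_mono)
    fix m assume "m \<in> {..<M}"
    then have "m < M" by simp
    moreover have "W m < \<beta> m \<Longrightarrow> x m \<le> v m"
      using False \<open>m < M\<close> by (meson not_le)
    moreover have "0 \<le> x m"
      using x \<open>m < M\<close> unfolding Yset_def by simp
    ultimately show "(x m - v m) * \<phi> m (w m + v m)
        \<le> (if \<beta> m \<le> W m then \<phi> m (W m) else 0) * x m - cost_above_threshold L \<alpha> (C m) (w m) (w m + v m)"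
      using W by (intro marginal_term_le)
  qed
  finally show ?thesis by (simp add: sum_subtractf)
qed

end

section \<open>The upper bound\<close>

locale ota_execution = competitive_threshold +
  fixes M :: nat and C :: "nat \<Rightarrow> real" and N :: nat and D :: "nat \<Rightarrow> real"
    and Y :: "nat \<Rightarrow> nat \<Rightarrow> real" and g :: "nat \<Rightarrow> real \<Rightarrow> real" and y :: "nat \<Rightarrow> nat \<Rightarrow> real"
  assumes valid: "valid_instance L U M C N D Y g"
    and run: "ota_run (\<lambda>m. phi_star L \<alpha> (C m)) M C N D Y g y"
begin

definition load :: "nat \<Rightarrow> nat \<Rightarrow> real" where
  "load n m = (\<Sum>k<n. y k m)"

lemma load_0 [simp]: "load 0 m = 0"
  and load_Suc: "load (Suc n) m = load n m + y n m"
  by (simp_all add: load_def)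

lemma capacity_pos: "m < M \<Longrightarrow> 0 < C m"
  using valid by (simp add: valid_instance_def)

lemma alloc_nonneg: "n < N \<Longrightarrow> m < M \<Longrightarrow> 0 \<le> y n m"
  using run unfolding ota_run_def ota_choice_def Let_def Yset_def load_def by auto

lemma load_nonneg: "m < M \<Longrightarrow> n \<le> N \<Longrightarrow> 0 \<le> load n m"
  unfolding load_def using alloc_nonneg by (intro sum_nonneg) auto

lemma load_le_final: "m < M \<Longrightarrow> n \<le> N \<Longrightarrow> load n m \<le> load N m"
  unfolding load_def using alloc_nonneg by (intro sum_mono2) auto

lemma ota_step_item: "n < N \<Longrightarrow> ota_step L \<alpha> U M C (D n) (Y n) (g n) (load n) (y n)"
  using valid run capacity_pos
  unfolding ota_step_def ota_step_axioms_def valid_instance_def ota_run_def load_def[abs_def]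
  by (auto intro: competitive_threshold_axioms)

lemma primitive_final_load_le_value:
  "(\<Sum>m<M. phi_star_primitive L \<alpha> (C m) (load N m)) \<le> total_value M N g y"
proof -
  have "(\<Sum>m<M. phi_star_primitive L \<alpha> (C m) (load N m))
      = (\<Sum>m<M. phi_star_primitive L \<alpha> (C m) (load N m) - phi_star_primitive L \<alpha> (C m) (load 0 m))"
    using capacity_pos by (intro sum.cong) (simp_all add: phi_star_primitive_zero)
  also have "\<dots> = (\<Sum>n<N. \<Sum>m<M. phi_star_primitive L \<alpha> (C m) (load n m + y n m)
                       - phi_star_primitive L \<alpha> (C m) (load n m))"
  proof -
    have "(\<Sum>n<N. phi_star_primitive L \<alpha> (C m) (load (Suc n) m) - phi_star_primitive L \<alpha> (C m) (load n m))
        = phi_star_primitive L \<alpha> (C m) (load N m) - phi_star_primitive L \<alpha> (C m) (load 0 m)" for m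
      by (rule sum_lessThan_telescope)
    then show ?thesis
      by (subst sum.swap) (simp add: load_Suc[symmetric])
  qed
  also have "\<dots> \<le> total_value M N g y"
    unfolding total_value_def using ota_step.value_ge_pseudo_cost[OF ota_step_item]
    by (intro sum_mono) simp
  finally show ?thesis .
qed

lemma sum_cost_above_threshold_loads:
  "(\<Sum>n<N. \<Sum>m<M. cost_above_threshold L \<alpha> (C m) (load n m) (load (Suc n) m))
    = (\<Sum>m<M. cost_above_threshold L \<alpha> (C m) 0 (load N m))"
proof -
  have "(\<Sum>n<N. cost_above_threshold L \<alpha> (C m) (load n m) (load (Suc n) m))
      = cost_above_threshold L \<alpha> (C m) 0 (load N m)" for m
    using sum_cost_above_threshold_telescope[of L \<alpha> "C m" "\<lambda>n. load n m" N] by simp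
  then show ?thesis
    by (subst sum.swap) simp
qed

lemma feasible_value_le:
  assumes x: "offline_feasible M C N D Y x"
  shows "total_value M N g x \<le> \<alpha> * total_value M N g y"
proof -
  let ?price = "\<lambda>m. if C m / (\<alpha> - 1) \<le> load N m then phi_star L \<alpha> (C m) (load N m) else 0"
  have "total_value M N g x \<le> (\<Sum>n<N. g n (\<Sum>m<M. y n m) + (\<Sum>m<M. ?price m * x n m)
      - (\<Sum>m<M. cost_above_threshold L \<alpha> (C m) (load n m) (load (Suc n) m)))"
    unfolding total_value_def load_Suc
  proof (rule sum_mono)
    fix n assume "n \<in> {..<N}"
    then have n: "n < N" by simp
    have "x n \<in> Yset M (D n) (Y n)"
      using x n unfolding offline_feasible_def by simp
    moreover have "load n m + y n m \<le> load N m" if "m < M" for m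
      using load_le_final[OF that, of "Suc n"] n by (simp add: load_Suc)
    ultimately show "g n (\<Sum>m<M. x n m) \<le> g n (\<Sum>m<M. y n m) + (\<Sum>m<M. ?price m * x n m)
      - (\<Sum>m<M. cost_above_threshold L \<alpha> (C m) (load n m) (load n m + y n m))"
      by (rule ota_step.item_bound[OF ota_step_item[OF n]])
  qed
  also have "\<dots> = total_value M N g y
      + (\<Sum>m<M. ?price m * (\<Sum>n<N. x n m) - cost_above_threshold L \<alpha> (C m) 0 (load N m))"
    using sum_cost_above_threshold_loads
    by (simp add: total_value_def sum.distrib sum_subtractf sum_distrib_left sum.swap[of _ "{..<N}"])
  also have "\<dots> \<le> total_value M N g y + (\<Sum>m<M. (\<alpha> - 1) * phi_star_primitive L \<alpha> (C m) (load N m))"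
    using x capacity_pos load_nonneg
    by (intro add_left_mono sum_mono dual_price_bound) (auto simp: offline_feasible_def)
  also have "\<dots> \<le> total_value M N g y + (\<alpha> - 1) * total_value M N g y"
    using primitive_final_load_le_value alpha_gt_1
    by (simp add: sum_distrib_left[symmetric] mult_left_mono)
  also have "\<dots> = \<alpha> * total_value M N g y"
    by (simp add: algebra_simps)
  finally show ?thesis .
qed

theorem OPT_le: "OPT M C N D Y g \<le> \<alpha> * total_value M N g y"
proof -
  have "offline_feasible M C N D Y (\<lambda>_ _. 0)"
    using valid unfolding valid_instance_def assumptionB_def offline_feasible_def Yset_def
    by (auto simp: less_imp_le)
  then show ?thesis
    unfolding OPT_def using feasible_value_le by (intro cSup_least) auto
qed

end

section \<open>A tight instance\<close>

lemma sum_lessThan_2: "(\<Sum>m<(2::nat). f m) = f 0 + (f 1 :: 'a::comm_monoid_add)"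
  by (simp add: numeral_2_eq_2)

lemma exists_nat_mult_eq_small:
  fixes a \<delta> :: real
  assumes "0 \<le> a" "0 < \<delta>"
  shows "\<exists>K h. 0 < h \<and> h < \<delta> \<and> real K * h = a"
proof (cases "a = 0")
  case True
  then show ?thesis using assms by (intro exI[of _ 0] exI[of _ "\<delta> / 2"]) auto
next
  case False
  obtain K :: nat where K: "a / \<delta> < real K"
    using reals_Archimedean2 by blast
  then have "0 < real K" using assms False by (smt (verit) divide_nonneg_pos)
  then show ?thesis
    using K assms False by (intro exI[of _ K] exI[of _ "a / real K"]) (auto simp: field_simps)
qed

lemma exp_mult_le_diff:
  fixes a t :: real
  shows "t * exp (a + t) \<le> (1 + t) * (exp (a + t) - exp a)"
proof -
  have "exp a * (1 + t) \<le> exp a * exp t"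
    using exp_ge_add_one_self[of t] by (intro mult_left_mono) auto
  then show ?thesis by (simp add: exp_add algebra_simps)
qed

lemma sum_mult_exp_le:
  fixes t :: real
  shows "(\<Sum>n<K. t * exp (t * real (Suc n))) \<le> (1 + t) * (exp (t * real K) - 1)"
proof -
  have "(\<Sum>n<K. t * exp (t * real (Suc n))) \<le> (\<Sum>n<K. (1 + t) * (exp (t * real (Suc n)) - exp (t * real n)))"
    using exp_mult_le_diff[of t "t * real _"] by (intro sum_mono) (simp add: algebra_simps)
  also have "\<dots> = (1 + t) * (\<Sum>n<K. exp (t * real (Suc n)) - exp (t * real n))"
    by (simp add: sum_distrib_left)
  also have "\<dots> = (1 + t) * (exp (t * real K) - 1)"
    using sum_lessThan_telescope[of "\<lambda>n. exp (t * real n)" K] by simp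
  finally show ?thesis .
qed

lemma assumptionB_linear:
  assumes "0 \<le> L" "L \<le> p" "p \<le> U" "0 < Dn" "\<And>m. m < M \<Longrightarrow> 0 \<le> Yn m"
  shows "assumptionB L U M Dn Yn (\<lambda>s. p * s)"
proof -
  let ?S = "(\<lambda>u. \<Sum>m<M. u m) ` Yset M Dn Yn"
  have "mono_on ?S (\<lambda>s. p * s)"
    using assms by (intro mono_onI mult_left_mono) auto
  moreover have "concave_on ?S (\<lambda>s. p * s)"
    using convex_Yset_totals[of M Dn Yn] unfolding concave_on_iff by (auto simp: algebra_simps)
  moreover have "\<exists>d. ((\<lambda>s. p * s) has_real_derivative d) (at s within ?S) \<and> L \<le> d \<and> d \<le> U" for s
    using assms by (intro exI[of _ p]) (auto intro!: derivative_eq_intros)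
  ultimately show ?thesis
    using assms unfolding assumptionB_def Let_def by auto
qed

definition only_first :: "real \<Rightarrow> nat \<Rightarrow> real" where
  "only_first a m = (if m = 0 then a else 0)"

lemma Yset_2_only_first:
  assumes "u \<in> Yset 2 D (only_first a)"
  shows "0 \<le> u 0" "u 0 \<le> a" "u 1 = 0" "2 \<le> m \<Longrightarrow> u m = 0"
proof -
  have "\<forall>m<2. 0 \<le> u m \<and> u m \<le> only_first a m"
    using assms unfolding Yset_def by blast
  from this[rule_format, of 0] this[rule_format, of 1]
  show "0 \<le> u 0" "u 0 \<le> a" "u 1 = 0"
    by (auto simp: only_first_def)
  show "2 \<le> m \<Longrightarrow> u m = 0"
    using assms unfolding Yset_def by blast
qed

lemma (in threshold) ota_choice_price_item:
  assumes "0 \<le> w" "0 < h" "w + h \<le> 1"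
  shows "ota_choice (\<lambda>_. phi_star L \<alpha> 1) 2 (\<lambda>_. 1) h (only_first h)
     (\<lambda>s. phi_star L \<alpha> 1 (w + h) * s) (only_first w) (only_first h)"
proof -
  let ?p = "phi_star L \<alpha> 1 (w + h)"
  have utility: "?p * (\<Sum>m<2. u m) - (\<Sum>m<2. integral {only_first w m..only_first w m + u m} (phi_star L \<alpha> 1))
      = ?p * u 0 - (phi_star_primitive L \<alpha> 1 (w + u 0) - phi_star_primitive L \<alpha> 1 w)"
    if "u \<in> Yset 2 h (only_first h)" for u
    using Yset_2_only_first[OF that] by (simp add: sum_lessThan_2 only_first_def integral_phi_star)
  let ?F = "{u \<in> Yset 2 h (only_first h). \<forall>m<2. only_first w m + u m \<le> 1}"
  have v: "only_first h \<in> ?F"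
    using assms unfolding Yset_def by (auto simp: only_first_def sum_lessThan_2)
  show ?thesis
    unfolding ota_choice_def Let_def
  proof (intro conjI ballI impI)
    fix u assume u: "u \<in> ?F"
    then have u_at: "u 0 \<le> h" "u 1 = 0"
      using Yset_2_only_first by auto
    have "?p * u 0 - (phi_star_primitive L \<alpha> 1 (w + u 0) - phi_star_primitive L \<alpha> 1 w)
        \<le> ?p * only_first h 0 - (phi_star_primitive L \<alpha> 1 (w + only_first h 0) - phi_star_primitive L \<alpha> 1 w)"
      using phi_star_primitive_diff_bounds(2)[of 1 "w + u 0" "w + h"] u_at
      by (simp add: only_first_def algebra_simps)
    then show "?p * (\<Sum>m<2. u m) - (\<Sum>m<2. integral {only_first w m..only_first w m + u m} (phi_star L \<alpha> 1))
        \<le> ?p * (\<Sum>m<2. only_first h m)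
          - (\<Sum>m<2. integral {only_first w m..only_first w m + only_first h m} (phi_star L \<alpha> 1))"
      using utility[of u] utility[of "only_first h"] u v by simp
    show "(\<Sum>m<2. u m) \<le> (\<Sum>m<2. only_first h m)"
      using u_at by (simp add: only_first_def sum_lessThan_2)
  qed (use v in simp)
qed

lemma (in threshold) ota_choice_blocked_item:
  "ota_choice (\<lambda>_. phi_star L \<alpha> 1) 2 (\<lambda>_. 1) 1 (only_first 1) g (only_first 1) (\<lambda>_. 0)"
proof -
  let ?F = "{u \<in> Yset 2 1 (only_first 1). \<forall>m<2. only_first 1 m + u m \<le> 1}"
  have "u = (\<lambda>_. 0)" if u: "u \<in> ?F" for u
  proof
    fix m
    have uY: "u \<in> Yset 2 1 (only_first 1)" using u by simp
    have "u 0 = 0"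
      using Yset_2_only_first(1)[OF uY] u[THEN CollectD, THEN conjunct2, rule_format, of 0]
      by (simp add: only_first_def)
    then show "u m = 0"
      using Yset_2_only_first(3,4)[OF uY] by (cases "m < 2") (auto simp: less_2_cases_iff)
  qed
  moreover have "(\<lambda>_. 0) \<in> ?F"
    by (simp add: Yset_def only_first_def)
  ultimately have "?F = {\<lambda>_. 0}" by blast
  then show ?thesis
    unfolding ota_choice_def Let_def by simp
qed

text \<open>Below the threshold every allocation has pseudo-utility zero, so any allocation of
  maximal total is a valid choice; the adversary puts the whole item into knapsack 0.\<close>

lemma (in competitive_threshold) ota_choice_first_item:
  "ota_choice (\<lambda>_. phi_star L \<alpha> 1) 2 (\<lambda>_. 1) (1 / (\<alpha> - 1)) (\<lambda>_. 1 / (\<alpha> - 1)) (\<lambda>s. L * s)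
     (\<lambda>_. 0) (only_first (1 / (\<alpha> - 1)))"
proof -
  let ?b = "1 / (\<alpha> - 1)"
  have b: "0 < ?b" "?b \<le> 1" using alpha_gt_1 threshold_le_capacity[of 1] by auto
  have zero_utility: "L * (\<Sum>m<2. u m) - (\<Sum>m<2. integral {0..0 + u m} (phi_star L \<alpha> 1)) = 0"
    if "u \<in> Yset 2 ?b (\<lambda>_. ?b)" for u
  proof -
    have "integral {0..u m} (phi_star L \<alpha> 1) = L * u m" if "m < 2" for m
      using \<open>u \<in> _\<close> that b unfolding Yset_def
      by (simp add: integral_phi_star phi_star_primitive_below_threshold)
    from this[of 0] this[of 1] show ?thesis
      by (simp add: sum_lessThan_2 distrib_left)
  qed
  let ?F = "{u \<in> Yset 2 ?b (\<lambda>_. ?b). \<forall>m<2. 0 + u m \<le> 1}"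
  have v: "only_first ?b \<in> ?F"
    using b unfolding Yset_def by (auto simp: only_first_def sum_lessThan_2)
  show ?thesis
    unfolding ota_choice_def Let_def
  proof (intro conjI ballI impI)
    fix u assume u: "u \<in> ?F"
    then show "L * (\<Sum>m<2. u m) - (\<Sum>m<2. integral {0..0 + u m} (phi_star L \<alpha> 1))
        \<le> L * (\<Sum>m<2. only_first ?b m) - (\<Sum>m<2. integral {0..0 + only_first ?b m} (phi_star L \<alpha> 1))"
      using zero_utility v by simp
    show "(\<Sum>m<2. u m) \<le> (\<Sum>m<2. only_first ?b m)"
      using u unfolding Yset_def by (simp add: only_first_def sum_lessThan_2)
  qed (use v in simp)
qed

locale tight_instance = competitive_threshold +
  fixes K :: nat and h :: real
  assumes h_pos: "0 < h" and grid: "real K * h = 1 - 1 / (\<alpha> - 1)"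
begin

definition first_size :: real where
  "first_size = 1 / (\<alpha> - 1)"

definition price :: "nat \<Rightarrow> real" where
  "price n = (if n = 0 then L else if n \<le> K then L * exp (\<alpha> * h * real n) else U)"

definition demand :: "nat \<Rightarrow> real" where
  "demand n = (if n = 0 then first_size else if n \<le> K then h else 1)"

definition rate_limit :: "nat \<Rightarrow> nat \<Rightarrow> real" where
  "rate_limit n = (if n = 0 then (\<lambda>_. first_size) else only_first (demand n))"

definition alloc :: "nat \<Rightarrow> nat \<Rightarrow> real" where
  "alloc n = (if n = 0 then only_first first_size else if n \<le> K then only_first h else (\<lambda>_. 0))"

lemma first_size_pos: "0 < first_size"
  using alpha_gt_1 by (simp add: first_size_def)

lemma first_size_add_grid: "first_size + h * real K = 1"
  using grid by (simp add: first_size_def algebra_simps)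

lemma exp_final_price: "L * exp (\<alpha> * h * real K) = U"
proof -
  have "\<alpha> * h * real K = \<alpha> * (real K * h)"
    by (simp add: algebra_simps)
  also have "\<dots> = \<alpha> * (1 - 1 / (\<alpha> - 1))"
    using grid by simp
  also have "\<dots> = \<alpha> - 1 - 1 / (\<alpha> - 1)"
    using alpha_gt_1 by (simp add: field_simps)
  finally show ?thesis
    using alpha_eq L_pos L_le_U by simp
qed

lemma price_eq_phi_star:
  assumes "1 \<le> n"
  shows "L * exp (\<alpha> * h * real n) = phi_star L \<alpha> 1 (first_size + h * real n)"
proof -
  have "\<alpha> / 1 * (first_size + h * real n) - \<alpha> / (\<alpha> - 1) = \<alpha> * h * real n"
    by (simp add: first_size_def algebra_simps)
  moreover have "0 \<le> h * real n"
    using h_pos by simp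
  then have "\<not> first_size + h * real n < 1 / (\<alpha> - 1)"
    by (simp add: first_size_def)
  ultimately show ?thesis
    unfolding phi_star_def by simp
qed

lemma price_bounds: "L \<le> price n" "price n \<le> U"
proof -
  have "L * exp (\<alpha> * h * real n) \<le> L * exp (\<alpha> * h * real K)" if "n \<le> K"
    using that h_pos alpha_gt_1 L_pos by (simp add: mult_left_mono)
  moreover have "L \<le> L * exp (\<alpha> * h * real n)"
    using h_pos alpha_gt_1 L_pos by simp
  ultimately show "L \<le> price n" "price n \<le> U"
    using L_le_U exp_final_price by (auto simp: price_def)
qed

lemma valid: "valid_instance L U 2 (\<lambda>_. 1) (Suc (Suc K)) demand rate_limit (\<lambda>n s. price n * s)"
  unfolding valid_instance_def
proof (intro conjI allI impI)
  fix n
  have "0 < demand n" using h_pos first_size_pos by (simp add: demand_def)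
  moreover have "0 \<le> rate_limit n m" for m
    using \<open>0 < demand n\<close> first_size_pos by (simp add: rate_limit_def only_first_def)
  ultimately show "assumptionB L U 2 (demand n) (rate_limit n) (\<lambda>s. price n * s)"
    using L_pos price_bounds by (intro assumptionB_linear) auto
qed simp_all

lemma load_alloc: "j \<le> K \<Longrightarrow> (\<Sum>k<Suc j. alloc k m) = only_first (first_size + h * real j) m"
proof (induction j)
  case (Suc j)
  have "(\<Sum>k<Suc (Suc j). alloc k m) = (\<Sum>k<Suc j. alloc k m) + alloc (Suc j) m"
    by (rule sum.lessThan_Suc)
  also have "\<dots> = only_first (first_size + h * real j) m + only_first h m"
    using Suc by (simp add: alloc_def)
  finally show ?case
    by (simp add: only_first_def algebra_simps)
qed (simp add: alloc_def)

lemma run: "ota_run (\<lambda>m. phi_star L \<alpha> 1) 2 (\<lambda>_. 1) (Suc (Suc K)) demand rate_limit (\<lambda>n s. price n * s) alloc"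
  unfolding ota_run_def
proof (intro allI impI)
  fix n assume "n < Suc (Suc K)"
  then consider "n = 0" | j where "n = Suc j" "j < K" | "n = Suc K"
    by (metis less_antisym less_Suc_eq_0_disj)
  then show "ota_choice (\<lambda>m. phi_star L \<alpha> 1) 2 (\<lambda>_. 1) (demand n) (rate_limit n) (\<lambda>s. price n * s)
      (\<lambda>m. \<Sum>k<n. alloc k m) (alloc n)"
  proof cases
    case 1
    then show ?thesis
      using ota_choice_first_item
      by (simp add: demand_def rate_limit_def price_def alloc_def first_size_def)
  next
    case (2 j)
    let ?w = "first_size + h * real j"
    have w_next: "?w + h = first_size + h * real (Suc j)"
      by (simp add: algebra_simps)
    have "price n = L * exp (\<alpha> * h * real (Suc j))"
      using 2 by (simp add: price_def)
    also have "\<dots> = phi_star L \<alpha> 1 (?w + h)"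
      unfolding w_next by (rule price_eq_phi_star) simp
    finally have price_n: "price n = phi_star L \<alpha> 1 (?w + h)" .
    have "h * real (Suc j) \<le> h * real K"
      using 2 h_pos by simp
    then have "?w + h \<le> 1"
      using w_next first_size_add_grid by linarith
    moreover have "0 \<le> ?w"
      using first_size_pos h_pos by simp
    moreover have "(\<lambda>m. \<Sum>k<n. alloc k m) = only_first ?w"
      using load_alloc[of j] 2 by auto
    ultimately show ?thesis
      using ota_choice_price_item[OF _ h_pos, of ?w] 2 price_n
      by (simp add: demand_def rate_limit_def alloc_def)
  next
    case 3
    then have "(\<lambda>m. \<Sum>k<n. alloc k m) = only_first 1"
      using load_alloc[of K] first_size_add_grid by auto
    then show ?thesis
      using ota_choice_blocked_item 3 by (simp add: demand_def rate_limit_def alloc_def)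
  qed
qed

lemma sum_items: "(\<Sum>n<Suc (Suc K). f n) = f 0 + (\<Sum>j<K. f (Suc j)) + (f (Suc K) :: real)"
proof -
  have "(\<Sum>n<Suc (Suc K). f n) = (\<Sum>n<Suc K. f n) + f (Suc K)"
    by (rule sum.lessThan_Suc)
  also have "(\<Sum>n<Suc K. f n) = f 0 + (\<Sum>j<K. f (Suc j))"
    by (rule sum.lessThan_Suc_shift)
  finally show ?thesis .
qed

definition offline_alloc :: "nat \<Rightarrow> nat \<Rightarrow> real" where
  "offline_alloc n = (if n = 0 then (\<lambda>m. if m = 1 then first_size else 0)
    else if n = Suc K then only_first 1 else (\<lambda>_. 0))"

lemma offline_alloc_feasible: "offline_feasible 2 (\<lambda>_. 1) (Suc (Suc K)) demand rate_limit offline_alloc"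
proof -
  have "first_size \<le> 1"
    using first_size_add_grid h_pos by (smt (verit) of_nat_0_le_iff mult_nonneg_nonneg)
  moreover have "(\<Sum>j<K. offline_alloc (Suc j) m) = 0" for m
    by (intro sum.neutral) (simp add: offline_alloc_def)
  ultimately have "(\<Sum>n<Suc (Suc K). offline_alloc n m) \<le> 1" if "m < 2" for m
    using that unfolding sum_items by (auto simp: offline_alloc_def only_first_def less_2_cases_iff)
  moreover have "offline_alloc n \<in> Yset 2 (demand n) (rate_limit n)" for n
    using first_size_pos h_pos
    by (auto simp: offline_alloc_def Yset_def demand_def rate_limit_def only_first_def sum_lessThan_2)
  ultimately show ?thesis
    by (simp add: offline_feasible_def)
qed

lemma value_offline_alloc:
  "total_value 2 (Suc (Suc K)) (\<lambda>n s. price n * s) offline_alloc = L * first_size + U"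
proof -
  have "(\<Sum>j<K. price (Suc j) * (\<Sum>m<2. offline_alloc (Suc j) m)) = 0"
    by (intro sum.neutral) (simp add: offline_alloc_def)
  then show ?thesis
    unfolding total_value_def sum_items by (simp add: offline_alloc_def price_def only_first_def sum_lessThan_2)
qed

lemma OPT_ge: "L * first_size + U \<le> OPT 2 (\<lambda>_. 1) (Suc (Suc K)) demand rate_limit (\<lambda>n s. price n * s)"
proof -
  have "bdd_above (total_value 2 (Suc (Suc K)) (\<lambda>n s. price n * s)
      ` {x. offline_feasible 2 (\<lambda>_. 1) (Suc (Suc K)) demand rate_limit x})"
  proof (rule bdd_aboveI2)
    fix x assume "x \<in> {x. offline_feasible 2 (\<lambda>_. 1) (Suc (Suc K)) demand rate_limit x}"
    then have "(\<Sum>m<2. x n m) \<le> demand n" if "n < Suc (Suc K)" for n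
      using that unfolding offline_feasible_def Yset_def by auto
    then show "total_value 2 (Suc (Suc K)) (\<lambda>n s. price n * s) x \<le> (\<Sum>n<Suc (Suc K). price n * demand n)"
      unfolding total_value_def using price_bounds L_pos
      by (intro sum_mono mult_left_mono) (auto intro: order_trans[OF less_imp_le[OF L_pos]])
  qed
  then show ?thesis
    unfolding OPT_def using offline_alloc_feasible value_offline_alloc
    by (metis cSup_upper mem_Collect_eq image_eqI)
qed

lemma value_alloc:
  "total_value 2 (Suc (Suc K)) (\<lambda>n s. price n * s) alloc
    = L * first_size + (\<Sum>j<K. L * exp (\<alpha> * h * real (Suc j)) * h)"
proof -
  have "(\<Sum>j<K. price (Suc j) * (\<Sum>m<2. alloc (Suc j) m)) = (\<Sum>j<K. L * exp (\<alpha> * h * real (Suc j)) * h)"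
    by (intro sum.cong) (auto simp: alloc_def price_def only_first_def sum_lessThan_2)
  then show ?thesis
    unfolding total_value_def sum_items by (simp add: alloc_def price_def only_first_def sum_lessThan_2)
qed

lemma value_alloc_nonneg: "0 \<le> total_value 2 (Suc (Suc K)) (\<lambda>n s. price n * s) alloc"
  using L_pos h_pos first_size_pos unfolding value_alloc by (intro add_nonneg_nonneg sum_nonneg) auto

lemma value_alloc_le:
  "\<alpha> * total_value 2 (Suc (Suc K)) (\<lambda>n s. price n * s) alloc \<le> L * first_size + U + \<alpha> * h * (U - L)"
proof -
  have "\<alpha> * (\<Sum>j<K. L * exp (\<alpha> * h * real (Suc j)) * h) = L * (\<Sum>j<K. \<alpha> * h * exp (\<alpha> * h * real (Suc j)))"
    by (simp add: sum_distrib_left mult_ac)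
  also have "\<dots> \<le> L * ((1 + \<alpha> * h) * (exp (\<alpha> * h * real K) - 1))"
    using sum_mult_exp_le[of "\<alpha> * h" K] L_pos by (intro mult_left_mono) auto
  also have "\<dots> = (1 + \<alpha> * h) * (U - L)"
    using exp_final_price by (simp add: algebra_simps)
  finally have "\<alpha> * (\<Sum>j<K. L * exp (\<alpha> * h * real (Suc j)) * h) \<le> (1 + \<alpha> * h) * (U - L)" .
  moreover have "\<alpha> * (L * first_size) = L * first_size + L"
    using alpha_gt_1 by (simp add: first_size_def field_simps)
  ultimately show ?thesis
    unfolding value_alloc by (simp add: distrib_left algebra_simps)
qed

lemma mult_value_alloc_less_OPT:
  assumes "0 < c" "c * h * (U - L) < (\<alpha> - c) * (L * first_size + U) / \<alpha>"
  shows "c * total_value 2 (Suc (Suc K)) (\<lambda>n s. price n * s) alloc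
    < OPT 2 (\<lambda>_. 1) (Suc (Suc K)) demand rate_limit (\<lambda>n s. price n * s)"
proof -
  have "\<alpha> * (c * total_value 2 (Suc (Suc K)) (\<lambda>n s. price n * s) alloc) \<le> c * (L * first_size + U + \<alpha> * h * (U - L))"
    using value_alloc_le assms(1) by (simp add: mult.left_commute)
  also have "\<dots> < \<alpha> * (L * first_size + U)"
    using assms alpha_gt_1 by (simp add: field_simps)
  finally show ?thesis
    using OPT_ge alpha_gt_1 by (smt (verit) mult_less_cancel_left_pos)
qed

end

lemma (in competitive_threshold) competitive_ratio_lower_bound:
  assumes "c < \<alpha>"
  shows "\<exists>M C N D Y g y. valid_instance L U M C N D Y g \<and> ota_run (\<lambda>m. phi_star L \<alpha> (C m)) M C N D Y g y
    \<and> c * total_value M N g y < OPT M C N D Y g"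
proof -
  define c' where "c' = max c 1"
  have c': "c \<le> c'" "0 < c'" "c' < \<alpha>"
    using assms alpha_ge_2 by (auto simp: c'_def)
  define \<delta> where "\<delta> = (\<alpha> - c') * (L / (\<alpha> - 1) + U) / \<alpha> / (c' * (U - L + 1))"
  have "0 < \<delta>"
    unfolding \<delta>_def using c' L_pos L_le_U alpha_gt_1 by (intro divide_pos_pos mult_pos_pos) (auto intro: add_pos_nonneg)
  moreover have "0 \<le> 1 - 1 / (\<alpha> - 1)"
    using threshold_le_capacity[of 1] by simp
  ultimately obtain K h where h: "0 < h" "h < \<delta>" and grid: "real K * h = 1 - 1 / (\<alpha> - 1)"
    using exists_nat_mult_eq_small by blast
  interpret tight_instance L \<alpha> U K h
    using h grid by unfold_locales
  have "c' * h * (U - L) \<le> c' * h * (U - L + 1)"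
    using c' h by simp
  also have "\<dots> < c' * \<delta> * (U - L + 1)"
    using c' h L_le_U by (intro mult_strict_right_mono) auto
  also have "\<dots> = (\<alpha> - c') * (L * first_size + U) / \<alpha>"
    using c' L_le_U by (simp add: \<delta>_def first_size_def)
  finally have "c' * total_value 2 (Suc (Suc K)) (\<lambda>n s. price n * s) alloc
      < OPT 2 (\<lambda>_. 1) (Suc (Suc K)) demand rate_limit (\<lambda>n s. price n * s)"
    using mult_value_alloc_less_OPT c'(2) by blast
  moreover have "c * total_value 2 (Suc (Suc K)) (\<lambda>n s. price n * s) alloc
      \<le> c' * total_value 2 (Suc (Suc K)) (\<lambda>n s. price n * s) alloc"
    using c' value_alloc_nonneg by (intro mult_right_mono)
  ultimately show ?thesis
    using valid run by fastforce
qed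

theorem theorem3:
  fixes L U \<alpha> :: real
  assumes "0 < L" and "L \<le> U"
    and "\<alpha> > 1" and "\<alpha> - 1 - 1 / (\<alpha> - 1) = ln (U / L)"
  shows "competitive_ratio_is L U (\<lambda>C m. phi_star L \<alpha> (C m)) \<alpha>"
proof -
  interpret competitive_threshold L \<alpha> U
    using assms by unfold_locales
  show ?thesis
    unfolding competitive_ratio_is_def
  proof (intro conjI allI impI)
    fix M C N D Y g y
    assume "valid_instance L U M C N D Y g \<and> ota_run ((\<lambda>C m. phi_star L \<alpha> (C m)) C) M C N D Y g y"
    then interpret ota_execution L \<alpha> U M C N D Y g y
      by unfold_locales auto
    show "OPT M C N D Y g \<le> \<alpha> * total_value M N g y"
      by (rule OPT_le)
  qed (use competitive_ratio_lower_bound in simp)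
qed

end
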